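(* For every integer $n\ge 8$, Sepy has a winning strategy in the Dom-start Disjoint Domination Game played on the cycle $C_n$.
   Context: For a vertex $v$ of a graph $G$, $N[v]$ denotes its closed neighborhood. The Disjoint Domination Game on an isolate-free graph $G$ is played by Dom and Sepy with colors $p$ and $b$; $V_p,V_b$ denote the current sets of vertices of each color. Players alternate; either player may use either color. A move chooses a vertex $v$ and a color $c$ such that (i) $v$ is uncolored and (ii) some $u\in N[v]$ satisfies $N[u]\cap V_c=\emptyset$ (before the move); then $v$ gets color $c$. A player must make a legal move on his turn (no passing). The game ends as soon as either (s* ) some vertex $v$ has $N[v]\subseteq V_p$ or $N[v]\subseteq V_b$ — Sepy wins; or (d* ) both $V_p$ and $V_b$ are dominating sets — Dom wins. In the Dom-start game Dom moves first. *)

theory Defs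
  imports Main
begin

text \<open>A graph is given by a vertex set V and a symmetric adjacency relation E.\<close>

datatype color = ColP | ColB
datatype player = Dom | Sepy

definition cnbhd :: "'a set \<Rightarrow> ('a \<Rightarrow> 'a \<Rightarrow> bool) \<Rightarrow> 'a \<Rightarrow> 'a set" where
  "cnbhd V E v = insert v {u \<in> V. E v u}"

text \<open>A game position: the set of vertices coloured p and the set coloured b.\<close>

definition colset :: "'a set \<times> 'a set \<Rightarrow> color \<Rightarrow> 'a set" where
  "colset st c = (case c of ColP \<Rightarrow> fst st | ColB \<Rightarrow> snd st)"

definition legal_move :: "'a set \<Rightarrow> ('a \<Rightarrow> 'a \<Rightarrow> bool) \<Rightarrow> 'a set \<times> 'a set \<Rightarrow> 'a \<Rightarrow> color \<Rightarrow> bool" where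
  "legal_move V E st v c \<longleftrightarrow> v \<in> V \<and> v \<notin> fst st \<and> v \<notin> snd st \<and>
     (\<exists>u \<in> cnbhd V E v. cnbhd V E u \<inter> colset st c = {})"

definition do_move :: "'a set \<times> 'a set \<Rightarrow> 'a \<Rightarrow> color \<Rightarrow> 'a set \<times> 'a set" where
  "do_move st v c = (case c of ColP \<Rightarrow> (insert v (fst st), snd st) | ColB \<Rightarrow> (fst st, insert v (snd st)))"

definition sepy_end :: "'a set \<Rightarrow> ('a \<Rightarrow> 'a \<Rightarrow> bool) \<Rightarrow> 'a set \<times> 'a set \<Rightarrow> bool" where
  "sepy_end V E st \<longleftrightarrow> (\<exists>v \<in> V. cnbhd V E v \<subseteq> fst st \<or> cnbhd V E v \<subseteq> snd st)"

definition dominating :: "'a set \<Rightarrow> ('a \<Rightarrow> 'a \<Rightarrow> bool) \<Rightarrow> 'a set \<Rightarrow> bool" where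
  "dominating V E D \<longleftrightarrow> D \<subseteq> V \<and> (\<forall>v \<in> V. cnbhd V E v \<inter> D \<noteq> {})"

definition dom_end :: "'a set \<Rightarrow> ('a \<Rightarrow> 'a \<Rightarrow> bool) \<Rightarrow> 'a set \<times> 'a set \<Rightarrow> bool" where
  "dom_end V E st \<longleftrightarrow> dominating V E (fst st) \<and> dominating V E (snd st)"

fun other :: "player \<Rightarrow> player" where
  "other Dom = Sepy" | "other Sepy = Dom"

text \<open>Positions (colouring, player to move) from which Sepy has a winning strategy
  (the game is finite, so these are the least fixed point of the usual attractor rules).
  A player who has no legal move in a non-terminal position loses (this situation
  never occurs in the game, since a legal move always exists there).\<close>
inductive sepy_wins :: "'a set \<Rightarrow> ('a \<Rightarrow> 'a \<Rightarrow> bool) \<Rightarrow> 'a set \<times> 'a set \<Rightarrow> player \<Rightarrow> bool"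
  for V E where
  ended: "sepy_end V E st \<Longrightarrow> sepy_wins V E st t"
| sepy_move: "\<lbrakk>\<not> sepy_end V E st; \<not> dom_end V E st; legal_move V E st v c;
      sepy_wins V E (do_move st v c) Dom\<rbrakk> \<Longrightarrow> sepy_wins V E st Sepy"
| dom_move: "\<lbrakk>\<not> sepy_end V E st; \<not> dom_end V E st;
      \<forall>v c. legal_move V E st v c \<longrightarrow> sepy_wins V E (do_move st v c) Sepy\<rbrakk>
      \<Longrightarrow> sepy_wins V E st Dom"

definition cycle_V :: "nat \<Rightarrow> nat set" where
  "cycle_V n = {0..<n}"

definition cycle_E :: "nat \<Rightarrow> nat \<Rightarrow> nat \<Rightarrow> bool" where
  "cycle_E n i j \<longleftrightarrow> i < n \<and> j < n \<and> i \<noteq> j \<and> ((i + 1) mod n = j \<or> (j + 1) mod n = i)"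

end

(* Dom opens at some vertex v; Sepy answers by giving v+1 the same colour, so that one colour
   class contains the adjacent pair v, v+1. Whatever Dom's next vertex w is, Sepy then fills a
   whole closed neighbourhood with that colour: N[v+1] by colouring v+2, which is legal because
   N[v+3] is still free of the colour unless w lies in it; and otherwise N[v] by colouring v-1,
   legal because then N[v-2] is free of the colour. For n >= 8 the vertices v-3, ..., v+4 involved
   are pairwise distinct. *)

theory Submission
  imports Defs
begin

lemma colset_empty [simp]: "colset ({}, {}) c = {}"
  by (cases c) (simp_all add: colset_def)

lemma colset_do_move [simp]:
  "colset (do_move st v c) c' = (if c' = c then insert v (colset st c') else colset st c')"
  by (cases c; cases c') (simp_all add: colset_def do_move_def)

lemma ex_color: "(\<exists>c. P c) \<longleftrightarrow> P ColP \<or> P ColB"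
  by (metis color.exhaust)

lemma all_color: "(\<forall>c. P c) \<longleftrightarrow> P ColP \<and> P ColB"
  by (metis color.exhaust)

lemma sepy_end_iff_colset:
  "sepy_end V E st \<longleftrightarrow> (\<exists>x\<in>V. \<exists>c. cnbhd V E x \<subseteq> colset st c)"
  unfolding sepy_end_def ex_color by (simp add: colset_def)

lemma dom_end_iff_colset: "dom_end V E st \<longleftrightarrow> (\<forall>c. dominating V E (colset st c))"
  unfolding dom_end_def all_color by (simp add: colset_def)

lemma ex_other_color: "\<exists>c'. c' \<noteq> (c::color)"
  by (cases c) auto

lemma legal_moveI:
  assumes "v \<in> V" "\<And>c'. v \<notin> colset st c'"
    and "u \<in> cnbhd V E v" "cnbhd V E u \<inter> colset st c = {}"
  shows "legal_move V E st v c"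
  using assms unfolding legal_move_def colset_def by (metis color.simps(3,4))

lemma not_dom_end_if_undominated:
  assumes "x \<in> V" "cnbhd V E x \<inter> colset st c = {}"
  shows "\<not> dom_end V E st"
  using assms unfolding dom_end_iff_colset dominating_def by blast

lemma sepy_wins_by_completing_cnbhd:
  assumes "\<not> dom_end V E st" "legal_move V E st v c"
    and "x \<in> V" "cnbhd V E x \<subseteq> insert v (colset st c)"
  shows "sepy_wins V E st Sepy"
proof (cases "sepy_end V E st")
  case False
  have "sepy_end V E (do_move st v c)"
    unfolding sepy_end_iff_colset using assms(3,4) by auto
  then show ?thesis
    using False assms(1,2) by (blast intro: sepy_wins.intros)
qed (rule sepy_wins.ended)

lemma mod_add_left_cancel_less:
  fixes m n i j :: nat
  assumes "i < n" "j < n"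
  shows "(m + i) mod n = (m + j) mod n \<longleftrightarrow> i = j"
proof
  have le_case: "i = j" if "i \<le> j" "j < n" "(m + i) mod n = (m + j) mod n" for i j
  proof -
    have "n dvd (m + j) - (m + i)"
      using that by (subst mod_eq_dvd_iff_nat[symmetric]) simp_all
    then have "n dvd j - i" by simp
    with that show "i = j"
      by (metis diff_is_0_eq dvd_imp_le le_antisym less_le_trans not_gr0 diff_le_self not_le)
  qed
  assume "(m + i) mod n = (m + j) mod n"
  then show "i = j" using le_case[of i j] le_case[of j i] assms by linarith
qed simp

lemma three_consecutive_mod_distinct:
  fixes m n :: nat
  assumes "n \<ge> 3"
  shows "m mod n \<noteq> Suc m mod n" "Suc m mod n \<noteq> Suc (Suc m) mod n" "m mod n \<noteq> Suc (Suc m) mod n"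
  using mod_add_left_cancel_less[of 0 n 1 m] mod_add_left_cancel_less[of 1 n 2 m]
    mod_add_left_cancel_less[of 0 n 2 m] assms by simp_all

lemma Suc_mod_eq_Suc_mod_iff:
  fixes m u n :: nat
  shows "Suc u mod n = Suc m mod n \<longleftrightarrow> u mod n = m mod n"
  using mod_Suc by auto

lemma cycle_cnbhd:
  assumes "n \<ge> 3"
  shows "cnbhd (cycle_V n) (cycle_E n) (Suc m mod n) = {m mod n, Suc m mod n, Suc (Suc m) mod n}"
proof -
  have "cycle_E n (Suc m mod n) u \<longleftrightarrow> u = m mod n \<or> u = Suc (Suc m) mod n" if "u < n" for u
    using that three_consecutive_mod_distinct[OF assms, of m] assms Suc_mod_eq_Suc_mod_iff[of u n m]
    unfolding cycle_E_def by (auto simp: mod_Suc_eq)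
  then show ?thesis
    unfolding cnbhd_def cycle_V_def using assms by auto
qed

lemma cycle_not_sepy_end:
  assumes "n \<ge> 3" and small: "\<And>c. colset st c \<subseteq> {a, b}"
  shows "\<not> sepy_end (cycle_V n) (cycle_E n) st"
proof
  assume "sepy_end (cycle_V n) (cycle_E n) st"
  then obtain x c where "x < n" and covered: "cnbhd (cycle_V n) (cycle_E n) x \<subseteq> colset st c"
    unfolding sepy_end_iff_colset cycle_V_def by auto
  define m where "m = x + n - 1"
  have "x = Suc m mod n"
    using \<open>x < n\<close> assms(1) by (simp add: m_def)
  then have "{m mod n, Suc m mod n, Suc (Suc m) mod n} \<subseteq> {a, b}"
    using covered small[of c] cycle_cnbhd[OF assms(1), of m] by blast
  then show False
    using three_consecutive_mod_distinct[OF assms(1), of m] by blast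
qed

(* Dom's opening vertex will be pos 3. *)
locale cycle_window =
  fixes n b :: nat
  assumes eight_le: "8 \<le> n"
begin

abbreviation "V \<equiv> cycle_V n"
abbreviation "E \<equiv> cycle_E n"

definition pos :: "nat \<Rightarrow> nat" where
  "pos k = (b + k) mod n"

lemma pos_in_V: "pos k \<in> V"
  using eight_le by (simp add: pos_def cycle_V_def)

lemma pos_eq_iff: "i < 8 \<Longrightarrow> j < 8 \<Longrightarrow> pos i = pos j \<longleftrightarrow> i = j"
  unfolding pos_def using eight_le by (intro mod_add_left_cancel_less) simp_all

lemma cnbhd_pos: "cnbhd V E (pos (Suc k)) = {pos k, pos (Suc k), pos (Suc (Suc k))}"
  using cycle_cnbhd[of n "b + k"] eight_le by (simp add: pos_def)

(* The simplifier normalises pos 1 to pos (Suc 0), so the first equation is stated in that form. *)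
lemma cnbhd_pos_numeral:
  "cnbhd V E (pos (Suc 0)) = {pos 0, pos 1, pos 2}"
  "cnbhd V E (pos 2) = {pos 1, pos 2, pos 3}"
  "cnbhd V E (pos 3) = {pos 2, pos 3, pos 4}"
  "cnbhd V E (pos 4) = {pos 3, pos 4, pos 5}"
  "cnbhd V E (pos 5) = {pos 4, pos 5, pos 6}"
  "cnbhd V E (pos 6) = {pos 5, pos 6, pos 7}"
  using cnbhd_pos[of 0] cnbhd_pos[of 1] cnbhd_pos[of 2] cnbhd_pos[of 3] cnbhd_pos[of 4]
    cnbhd_pos[of 5]
  by (simp_all add: numeral_eq_Suc)

lemma sepy_wins_after_dom_reply:
  assumes coloured: "\<And>c'. colset st c' \<subseteq> {pos 3, pos 4, w}"
    and pair: "{pos 3, pos 4} \<subseteq> colset st c"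
    and sparse: "colset st c0 \<subseteq> {pos 3, pos 4}"
  shows "sepy_wins V E st Sepy"
proof -
  have "cnbhd V E (pos 6) \<inter> colset st c0 = {}"
    using sparse by (auto simp: cnbhd_pos_numeral pos_eq_iff)
  then have "\<not> dom_end V E st"
    by (rule not_dom_end_if_undominated[OF pos_in_V])
  show ?thesis
  proof (cases "w \<in> {pos 5, pos 6, pos 7}")
    case False
    have "pos 5 \<notin> colset st c'" for c'
      using coloured[of c'] False by (auto simp: pos_eq_iff)
    moreover have "cnbhd V E (pos 6) \<inter> colset st c = {}"
      using coloured[of c] False by (auto simp: cnbhd_pos_numeral pos_eq_iff)
    ultimately have legal: "legal_move V E st (pos 5) c"
      by (intro legal_moveI[OF pos_in_V, where u = "pos 6"]) (simp_all add: cnbhd_pos_numeral)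
    have "cnbhd V E (pos 4) \<subseteq> insert (pos 5) (colset st c)"
      using pair by (auto simp: cnbhd_pos_numeral)
    with \<open>\<not> dom_end V E st\<close> legal pos_in_V show ?thesis
      by (rule sepy_wins_by_completing_cnbhd)
  next
    case True
    have "pos 2 \<notin> colset st c'" for c'
      using coloured[of c'] True by (auto simp: pos_eq_iff)
    moreover have "cnbhd V E (pos 1) \<inter> colset st c = {}"
      using coloured[of c] True by (auto simp: cnbhd_pos_numeral pos_eq_iff)
    ultimately have legal: "legal_move V E st (pos 2) c"
      by (intro legal_moveI[OF pos_in_V, where u = "pos 1"]) (simp_all add: cnbhd_pos_numeral)
    have "cnbhd V E (pos 3) \<subseteq> insert (pos 2) (colset st c)"
      using pair by (auto simp: cnbhd_pos_numeral)
    with \<open>\<not> dom_end V E st\<close> legal pos_in_V show ?thesis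
      by (rule sepy_wins_by_completing_cnbhd)
  qed
qed

lemma sepy_wins_after_pair:
  "sepy_wins V E (do_move (do_move ({}, {}) (pos 3) c) (pos 4) c) Dom"
  (is "sepy_wins V E ?st Dom")
proof (rule sepy_wins.dom_move)
  have small: "colset ?st c' \<subseteq> {pos 3, pos 4}" for c'
    by simp
  then show "\<not> sepy_end V E ?st"
    using eight_le by (intro cycle_not_sepy_end) auto
  obtain c' where "c' \<noteq> c"
    using ex_other_color by blast
  then have "cnbhd V E (pos 0) \<inter> colset ?st c' = {}"
    by simp
  then show "\<not> dom_end V E ?st"
    by (rule not_dom_end_if_undominated[OF pos_in_V])
  show "\<forall>w c'. legal_move V E ?st w c' \<longrightarrow> sepy_wins V E (do_move ?st w c') Sepy"
  proof (intro allI impI)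
    fix w :: nat and c' :: color
    obtain c0 where "c0 \<noteq> c'"
      using ex_other_color by blast
    then have "colset (do_move ?st w c') c0 \<subseteq> {pos 3, pos 4}"
      using small[of c0] by simp
    then show "sepy_wins V E (do_move ?st w c') Sepy"
      by (intro sepy_wins_after_dom_reply[where w = w and c = c]) auto
  qed
qed

lemma sepy_wins_after_first_move:
  "sepy_wins V E (do_move ({}, {}) (pos 3) c) Sepy"
  (is "sepy_wins V E ?st Sepy")
proof (rule sepy_wins.sepy_move)
  show "\<not> sepy_end V E ?st"
    using eight_le by (intro cycle_not_sepy_end[where a = "pos 3" and b = "pos 3"]) simp_all
  obtain c' where "c' \<noteq> c"
    using ex_other_color by blast
  then have "cnbhd V E (pos 0) \<inter> colset ?st c' = {}"
    by simp
  then show "\<not> dom_end V E ?st"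
    by (rule not_dom_end_if_undominated[OF pos_in_V])
  have "pos 4 \<notin> colset ?st c'" for c'
    by (simp add: pos_eq_iff)
  moreover have "cnbhd V E (pos 5) \<inter> colset ?st c = {}"
    by (simp add: cnbhd_pos_numeral pos_eq_iff)
  ultimately show "legal_move V E ?st (pos 4) c"
    by (intro legal_moveI[OF pos_in_V, where u = "pos 5"]) (simp_all add: cnbhd_pos_numeral)
  show "sepy_wins V E (do_move ?st (pos 4) c) Dom"
    by (rule sepy_wins_after_pair)
qed

end

theorem proposition6:
  fixes n :: nat
  assumes "n \<ge> 8"
  shows "sepy_wins (cycle_V n) (cycle_E n) ({}, {}) Dom"
proof (rule sepy_wins.dom_move)
  show "\<not> sepy_end (cycle_V n) (cycle_E n) ({}, {})"
    using assms by (intro cycle_not_sepy_end[where a = 0 and b = 0]) simp_all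
  have "0 \<in> cycle_V n"
    using assms by (simp add: cycle_V_def)
  then show "\<not> dom_end (cycle_V n) (cycle_E n) ({}, {})"
    by (rule not_dom_end_if_undominated[where c = ColP]) simp
  show "\<forall>v c. legal_move (cycle_V n) (cycle_E n) ({}, {}) v c \<longrightarrow>
      sepy_wins (cycle_V n) (cycle_E n) (do_move ({}, {}) v c) Sepy"
  proof (intro allI impI)
    fix v c
    assume "legal_move (cycle_V n) (cycle_E n) ({}, {}) v c"
    then have "v < n"
      by (simp add: legal_move_def cycle_V_def)
    interpret cycle_window n "v + n - 3"
      using assms by unfold_locales
    have "pos 3 = v"
      using \<open>v < n\<close> assms by (simp add: pos_def)
    then show "sepy_wins (cycle_V n) (cycle_E n) (do_move ({}, {}) v c) Sepy"
      using sepy_wins_after_first_move by simp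
  qed
qed

end
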